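(* Let $U$ be a linear subspace of $L_2(\mathcal{X},\mathcal{Y},\mu)$ that is closed under $\mathcal{Q}$, i.e. $\mathcal{Q}U\subset U$. Define $S=\{f\in U: f \text{ is } \mathcal{G}\text{-equivariant}\}$ and $A=\{f\in U:\mathcal{Q}f=0\}$. Then $U$ admits the orthogonal decomposition $U=S\oplus A$, orthogonality being with respect to $\langle\cdot,\cdot\rangle_\mu$.
   Context: $\mathcal{G}$ is a compact, second countable, Hausdorff topological group with its Borel $\sigma$-algebra and Haar probability measure $\lambda$ ($\lambda(\mathcal{G})=1$). $\mathcal{X}$ is a nonempty Polish space with its Borel $\sigma$-algebra, on which $\mathcal{G}$ acts measurably, $(g,x)\mapsto gx$. $\mathcal{Y}=\mathbb{R}^k$ with an inner product $\langle\cdot,\cdot\rangle$ and induced norm $\|\cdot\|$, on which $\mathcal{G}$ acts by a measurable linear representation $\psi$ that is unitary: $\langle\psi(g)a,\psi(g)b\rangle=\langle a,b\rangle$ for all $a,b,g$; write $gy=\psi(g)y$. $\mu$ is a $\mathcal{G}$-invariant Borel probability measure on $\mathcal{X}$ (if $X\sim\mu$ then $gX\sim\mu$ for all $g$). $L_2(\mathcal{X},\mathcal{Y},\mu)$ is the Hilbert space of $\mu$-a.e. equivalence classes of measurable $f:\mathcal{X}\to\mathcal{Y}$ with $\|f\|_\mu^2=\int\|f(x)\|^2d\mu(x)<\infty$, inner product $\langle f,h\rangle_\mu=\int_\mathcal{X}\langle f(x),h(x)\rangle d\mu(x)$. A function $f$ is $\mathcal{G}$-equivariant if $f(gx)=\psi(g)f(x)$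 for all $g\in\mathcal{G},x\in\mathcal{X}$. The averaging operator is $\mathcal{Q}f(x)=\int_\mathcal{G}\psi(g^{-1})f(gx)\,d\lambda(g)$. *)

theory Defs
  imports "HOL-Probability.Probability"
begin

text \<open>A compact topological group structure on the whole type 'g, given by a
multiplication m, inverse i and unit e. (Second countability and the Hausdorff
property are imposed via type classes in the theorem.)\<close>
definition compact_group :: "('g::topological_space \<Rightarrow> 'g \<Rightarrow> 'g) \<Rightarrow> ('g \<Rightarrow> 'g) \<Rightarrow> 'g \<Rightarrow> bool" where
  "compact_group m i e \<longleftrightarrow>
     (\<forall>a b c. m (m a b) c = m a (m b c)) \<and>
     (\<forall>a. m e a = a \<and> m a e = a) \<and>
     (\<forall>a. m (i a) a = e \<and> m a (i a) = e) \<and>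
     continuous_on UNIV (\<lambda>p. m (fst p) (snd p)) \<and>
     continuous_on UNIV i \<and>
     compact (UNIV :: 'g set)"

definition haar_prob :: "('g::topological_space \<Rightarrow> 'g \<Rightarrow> 'g) \<Rightarrow> 'g measure \<Rightarrow> bool" where
  "haar_prob m lam \<longleftrightarrow>
     prob_space lam \<and> sets lam = sets borel \<and>
     (\<forall>g. \<forall>A\<in>sets borel. emeasure lam (m g ` A) = emeasure lam A)"

definition measurable_action :: "('g::topological_space \<Rightarrow> 'g \<Rightarrow> 'g) \<Rightarrow> 'g \<Rightarrow> ('g \<Rightarrow> 'x::topological_space \<Rightarrow> 'x) \<Rightarrow> bool" where
  "measurable_action m e act \<longleftrightarrow>
     (\<forall>x. act e x = x) \<and> (\<forall>g h x. act (m g h) x = act g (act h x)) \<and>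
     (\<lambda>p. act (fst p) (snd p)) \<in> borel_measurable (borel \<Otimes>\<^sub>M borel)"

definition unitary_rep :: "('g::topological_space \<Rightarrow> 'g \<Rightarrow> 'g) \<Rightarrow> 'g \<Rightarrow> ('g \<Rightarrow> 'y::euclidean_space \<Rightarrow> 'y) \<Rightarrow> bool" where
  "unitary_rep m e psi \<longleftrightarrow>
     (\<forall>g. linear (psi g)) \<and> psi e = id \<and> (\<forall>g h. psi (m g h) = psi g \<circ> psi h) \<and>
     (\<forall>g a b. inner (psi g a) (psi g b) = inner a b) \<and>
     (\<forall>y. (\<lambda>g. psi g y) \<in> borel_measurable borel)"

definition invariant_prob :: "('g \<Rightarrow> 'x::topological_space \<Rightarrow> 'x) \<Rightarrow> 'x measure \<Rightarrow> bool" where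
  "invariant_prob act mu \<longleftrightarrow>
     prob_space mu \<and> sets mu = sets borel \<and> (\<forall>g. distr mu borel (act g) = mu)"

text \<open>Representatives of elements of L_2(X,Y,mu).\<close>
definition L2_fun :: "'x measure \<Rightarrow> ('x \<Rightarrow> 'y::euclidean_space) \<Rightarrow> bool" where
  "L2_fun mu f \<longleftrightarrow> f \<in> borel_measurable mu \<and> integrable mu (\<lambda>x. (norm (f x))\<^sup>2)"

definition inner_mu :: "'x measure \<Rightarrow> ('x \<Rightarrow> 'y::euclidean_space) \<Rightarrow> ('x \<Rightarrow> 'y) \<Rightarrow> real" where
  "inner_mu mu f h = (\<integral>x. inner (f x) (h x) \<partial>mu)"

definition equivariant :: "('g \<Rightarrow> 'x \<Rightarrow> 'x) \<Rightarrow> ('g \<Rightarrow> 'y \<Rightarrow> 'y) \<Rightarrow> ('x \<Rightarrow> 'y) \<Rightarrow> bool" where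
  "equivariant act psi f \<longleftrightarrow> (\<forall>g x. f (act g x) = psi g (f x))"

definition Qop :: "('g \<Rightarrow> 'g) \<Rightarrow> 'g measure \<Rightarrow> ('g \<Rightarrow> 'y::euclidean_space \<Rightarrow> 'y) \<Rightarrow> ('g \<Rightarrow> 'x \<Rightarrow> 'x)
                   \<Rightarrow> ('x \<Rightarrow> 'y) \<Rightarrow> 'x \<Rightarrow> 'y" where
  "Qop i lam psi act f x = (\<integral>g. psi (i g) (f (act g x)) \<partial>lam)"

end

theory Submission
  imports Defs
begin

text \<open>Averaging over the Haar measure is a projection onto the equivariant functions:
  \<open>Q f\<close> is equivariant because the Haar measure of a compact group is invariant under
  left translation and inversion, and \<open>Q\<close> fixes equivariant functions, so \<open>Q (f - Q f) = 0\<close>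
  and \<open>f = Q f + (f - Q f)\<close> is the decomposition. For orthogonality, invariance of \<open>mu\<close> and
  Fubini turn \<open>\<langle>s, a\<rangle>\<close> into \<open>\<langle>s, Q a\<rangle>\<close> when \<open>s\<close> is equivariant.\<close>

lemma abs_inner_le_sum_norm_squares:
  fixes u v :: "'a::real_inner"
  shows "\<bar>inner u v\<bar> \<le> (norm u)\<^sup>2 + (norm v)\<^sup>2"
proof -
  have "2 * norm u * norm v \<le> (norm u)\<^sup>2 + (norm v)\<^sup>2"
    by (rule sum_squares_bound)
  moreover have "\<bar>inner u v\<bar> \<le> norm u * norm v"
    by (rule Cauchy_Schwarz_ineq2)
  moreover have "0 \<le> norm u * norm v" by simp
  ultimately show ?thesis by linarith
qed

lemma L2_fun_integrable_inner:
  assumes "L2_fun M f" "L2_fun M h"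
  shows "integrable M (\<lambda>x. inner (f x) (h x))"
proof (rule Bochner_Integration.integrable_bound)
  show "integrable M (\<lambda>x. (norm (f x))\<^sup>2 + (norm (h x))\<^sup>2)"
    using assms unfolding L2_fun_def by (intro Bochner_Integration.integrable_add) auto
  have [measurable]: "f \<in> borel_measurable M" "h \<in> borel_measurable M"
    using assms unfolding L2_fun_def by auto
  show "(\<lambda>x. inner (f x) (h x)) \<in> borel_measurable M"
    by measurable
  show "AE x in M. norm (inner (f x) (h x)) \<le> norm ((norm (f x))\<^sup>2 + (norm (h x))\<^sup>2)"
  proof (rule AE_I2)
    fix x
    have "0 \<le> (norm (f x))\<^sup>2 + (norm (h x))\<^sup>2" by simp
    then show "norm (inner (f x) (h x)) \<le> norm ((norm (f x))\<^sup>2 + (norm (h x))\<^sup>2)"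
      using abs_inner_le_sum_norm_squares[of "f x" "h x"] by (simp only: real_norm_def abs_of_nonneg)
  qed
qed

lemma (in finite_measure) L2_fun_integrable_norm:
  assumes "L2_fun M f"
  shows "integrable M (\<lambda>x. norm (f x))"
proof (rule square_integrable_imp_integrable)
  show "(\<lambda>x. norm (f x)) \<in> borel_measurable M" "integrable M (\<lambda>x. (norm (f x))\<^sup>2)"
    using assms unfolding L2_fun_def by auto
qed

locale haar_group =
  fixes m :: "'g::second_countable_topology \<Rightarrow> 'g \<Rightarrow> 'g" and i :: "'g \<Rightarrow> 'g" and e :: 'g
    and lam :: "'g measure"
  assumes compact_group: "compact_group m i e"
    and haar_prob: "haar_prob m lam"
begin

lemma m_assoc: "m (m a b) c = m a (m b c)"
  and l_one [simp]: "m e a = a" and r_one [simp]: "m a e = a"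
  and l_inv [simp]: "m (i a) a = e" and r_inv [simp]: "m a (i a) = e"
  using compact_group unfolding compact_group_def by blast+

lemma inv_mult_cancel [simp]: "m (i a) (m a b) = b"
  by (metis m_assoc l_inv l_one)

lemma mult_inv_cancel [simp]: "m a (m (i a) b) = b"
  by (metis m_assoc r_inv l_one)

lemma inv_inv [simp]: "i (i a) = a"
  by (metis inv_mult_cancel l_inv r_one)

lemma inv_mult: "i (m a b) = m (i b) (i a)"
  by (metis m_assoc inv_mult_cancel r_inv r_one)

lemma continuous_mult: "continuous_on UNIV (\<lambda>p. m (fst p) (snd p))"
  and continuous_inv: "continuous_on UNIV i"
  using compact_group unfolding compact_group_def by auto

lemma measurable_inv [measurable]: "i \<in> borel_measurable borel"
  using continuous_inv by (rule borel_measurable_continuous_onI)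

lemma measurable_mult_pair: "(\<lambda>p. m (fst p) (snd p)) \<in> borel_measurable (borel \<Otimes>\<^sub>M borel)"
  using continuous_mult by (simp add: borel_prod borel_measurable_continuous_onI)

lemma measurable_mult [measurable]:
  assumes "k \<in> borel_measurable M" "l \<in> borel_measurable M"
  shows "(\<lambda>z. m (k z) (l z)) \<in> borel_measurable M"
proof -
  have "(\<lambda>z. (k z, l z)) \<in> measurable M (borel \<Otimes>\<^sub>M borel)"
    using assms by measurable
  from measurable_compose[OF this measurable_mult_pair] show ?thesis by simp
qed

lemma prob_space_lam: "prob_space lam"
  and sets_lam [measurable_cong]: "sets lam = sets borel"
  and emeasure_left_translate: "A \<in> sets borel \<Longrightarrow> emeasure lam (m g ` A) = emeasure lam A"
  using haar_prob unfolding haar_prob_def by auto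

lemma space_lam [simp]: "space lam = UNIV"
  using sets_eq_imp_space_eq[OF sets_lam] by simp

lemma distr_left_translate: "distr lam lam (m a) = lam"
proof (rule measure_eqI)
  fix A assume "A \<in> sets (distr lam lam (m a))"
  then have A: "A \<in> sets borel" using sets_lam by simp
  have "m a -` A = m (i a) ` A"
    by (auto simp: image_iff) (metis inv_mult_cancel)
  then show "emeasure (distr lam lam (m a)) A = emeasure lam A"
    using A emeasure_left_translate[OF A, of "i a"] by (simp add: emeasure_distr sets_lam)
qed simp

lemma nn_integral_left_translate:
  assumes "f \<in> borel_measurable borel"
  shows "(\<integral>\<^sup>+g. f (m a g) \<partial>lam) = integral\<^sup>N lam f"
  using nn_integral_distr[of "m a" lam lam f] assms by (simp add: distr_left_translate)

lemma integral_left_translate: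
  fixes f :: "'g \<Rightarrow> 'b::{banach, second_countable_topology}"
  assumes "f \<in> borel_measurable borel"
  shows "(\<integral>g. f (m a g) \<partial>lam) = integral\<^sup>L lam f"
  using integral_distr[of "m a" lam lam f] assms by (simp add: distr_left_translate)

text \<open>A left Haar probability measure is also inversion invariant (compact groups are
  unimodular): integrate the indicator of \<open>h\<inverse> g \<in> A\<close> over both variables in either order.\<close>

lemma emeasure_inv_vimage:
  assumes A [measurable]: "A \<in> sets borel"
  shows "emeasure lam (i -` A) = emeasure lam A"
proof -
  interpret pair_prob_space lam lam
    using prob_space_lam
    by (simp add: pair_prob_space_def pair_sigma_finite_def prob_space_imp_sigma_finite)
  have "(\<lambda>p. indicator A (m (i (snd p)) (fst p)) :: ennreal) \<in> borel_measurable (borel \<Otimes>\<^sub>M borel)"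
    by measurable
  then have meas: "(\<lambda>(g, h). indicator A (m (i h) g) :: ennreal) \<in> borel_measurable (lam \<Otimes>\<^sub>M lam)"
    by (simp add: case_prod_beta' measurable_cong_sets[OF sets_pair_measure_cong[OF sets_lam sets_lam] refl])
  have "(\<integral>\<^sup>+g. indicator A (m (i h) g) \<partial>lam) = emeasure lam A" for h
    using nn_integral_left_translate[of "indicator A" "i h"] by (simp add: sets_lam)
  moreover have "(\<integral>\<^sup>+h. indicator A (m (i h) g) \<partial>lam) = emeasure lam (i -` A)" for g
  proof -
    have "(\<integral>\<^sup>+h. indicator A (m (i h) g) \<partial>lam) = (\<integral>\<^sup>+h. indicator A (m (i (m g h)) g) \<partial>lam)"
      by (rule nn_integral_left_translate[symmetric]) measurable
    also have "\<dots> = (\<integral>\<^sup>+h. indicator (i -` A) h \<partial>lam)"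
      by (simp add: inv_mult m_assoc indicator_def)
    also have "\<dots> = emeasure lam (i -` A)"
      using measurable_sets[OF measurable_inv A] by (simp add: sets_lam)
    finally show ?thesis .
  qed
  moreover have "emeasure lam UNIV = 1"
    using M1.emeasure_space_1 by simp
  ultimately show ?thesis
    using Fubini'[OF meas] by simp
qed

lemma distr_inv: "distr lam lam i = lam"
proof (rule measure_eqI)
  have i: "i \<in> measurable lam lam"
    using measurable_inv by (simp add: measurable_cong_sets[OF sets_lam sets_lam])
  fix A assume "A \<in> sets (distr lam lam i)"
  then show "emeasure (distr lam lam i) A = emeasure lam A"
    using emeasure_inv_vimage i by (simp add: emeasure_distr sets_lam vimage_def)
qed simp

lemma integral_inv:
  fixes f :: "'g \<Rightarrow> 'b::{banach, second_countable_topology}"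
  assumes "f \<in> borel_measurable borel"
  shows "(\<integral>g. f (i g) \<partial>lam) = integral\<^sup>L lam f"
  using integral_distr[of i lam lam f] assms by (simp add: distr_inv)

end

locale equivariant_setting = haar_group m i e lam
  for m :: "'g::second_countable_topology \<Rightarrow> 'g \<Rightarrow> 'g" and i e lam +
  fixes act :: "'g \<Rightarrow> 'x::topological_space \<Rightarrow> 'x" and mu :: "'x measure"
    and psi :: "'g \<Rightarrow> 'y::euclidean_space \<Rightarrow> 'y"
  assumes measurable_action: "measurable_action m e act"
    and unitary_rep: "unitary_rep m e psi"
    and invariant_prob: "invariant_prob act mu"
begin

lemma act_mult: "act (m g h) x = act g (act h x)"
  and measurable_act_pair: "(\<lambda>p. act (fst p) (snd p)) \<in> borel_measurable (borel \<Otimes>\<^sub>M borel)"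
  using measurable_action unfolding measurable_action_def by auto

lemma measurable_act [measurable]:
  assumes "k \<in> borel_measurable M" "l \<in> borel_measurable M"
  shows "(\<lambda>z. act (k z) (l z)) \<in> borel_measurable M"
proof -
  have "(\<lambda>z. (k z, l z)) \<in> measurable M (borel \<Otimes>\<^sub>M borel)"
    using assms by measurable
  from measurable_compose[OF this measurable_act_pair] show ?thesis by simp
qed

lemma linear_psi: "linear (psi g)"
  and psi_one: "psi e = id"
  and psi_mult: "psi (m g h) = psi g \<circ> psi h"
  and inner_psi: "inner (psi g a) (psi g b) = inner a b"
  and measurable_psi_orbit: "(\<lambda>g. psi g y) \<in> borel_measurable borel"
  using unitary_rep unfolding unitary_rep_def by auto

lemma psi_inv_cancel [simp]: "psi (i g) (psi g y) = y"
  by (metis comp_apply id_apply l_inv psi_one psi_mult)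

lemma norm_psi [simp]: "norm (psi g y) = norm y"
  using inner_psi[of g y y] by (simp add: norm_eq_sqrt_inner)

lemma inner_psi_adjoint: "inner (psi g a) b = inner a (psi (i g) b)"
  using inner_psi[of "i g" "psi g a" b] by simp

lemma measurable_psi [measurable]:
  assumes "k \<in> borel_measurable M" "l \<in> borel_measurable M"
  shows "(\<lambda>z. psi (k z) (l z)) \<in> borel_measurable M"
proof -
  have psi_basis_expansion: "psi g y = (\<Sum>b\<in>Basis. (y \<bullet> b) *\<^sub>R psi g b)" for g y
  proof -
    have "psi g y = psi g (\<Sum>b\<in>Basis. (y \<bullet> b) *\<^sub>R b)"
      by (simp add: euclidean_representation)
    also have "\<dots> = (\<Sum>b\<in>Basis. (y \<bullet> b) *\<^sub>R psi g b)"
      using linear_psi[of g] by (simp add: linear_sum linear_scale)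
    finally show ?thesis .
  qed
  have [measurable]: "(\<lambda>z. psi (k z) b) \<in> borel_measurable M" for b
    using measurable_compose[OF assms(1) measurable_psi_orbit] by simp
  have "(\<lambda>z. \<Sum>b\<in>Basis. (l z \<bullet> b) *\<^sub>R psi (k z) b) \<in> borel_measurable M"
    using assms by measurable
  then show ?thesis
    by (subst psi_basis_expansion)
qed

lemma prob_space_mu: "prob_space mu"
  and sets_mu [measurable_cong]: "sets mu = sets borel"
  and distr_act: "distr mu borel (act g) = mu"
  using invariant_prob unfolding invariant_prob_def by auto

lemma space_mu [simp]: "space mu = UNIV"
  using sets_eq_imp_space_eq[OF sets_mu] by simp

lemma sets_mu_lam [measurable_cong]: "sets (mu \<Otimes>\<^sub>M lam) = sets (borel \<Otimes>\<^sub>M borel)"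
  by (rule sets_pair_measure_cong[OF sets_mu sets_lam])

lemma L2_fun_borel_measurable: "L2_fun mu f \<Longrightarrow> f \<in> borel_measurable borel"
  unfolding L2_fun_def by (simp add: measurable_cong_sets[OF sets_mu refl])

lemma Qop_eq_integral_inv:
  assumes [measurable]: "f \<in> borel_measurable borel"
  shows "Qop i lam psi act f x = (\<integral>g. psi g (f (act (i g) x)) \<partial>lam)"
  using integral_inv[of "\<lambda>g. psi g (f (act (i g) x))"] unfolding Qop_def by simp

lemma Qop_act:
  assumes f [measurable]: "f \<in> borel_measurable borel"
  shows "Qop i lam psi act f (act h x) = psi h (Qop i lam psi act f x)"
proof -
  have "Qop i lam psi act f (act h x) = (\<integral>g. psi (m h g) (f (act (i (m h g)) (act h x))) \<partial>lam)"
    unfolding Qop_eq_integral_inv[OF f] by (rule integral_left_translate[symmetric]) measurable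
  also have "\<dots> = (\<integral>g. psi h (psi g (f (act (i g) x))) \<partial>lam)"
    by (simp add: psi_mult inv_mult m_assoc flip: act_mult)
  also have "\<dots> = psi h (\<integral>g. psi g (f (act (i g) x)) \<partial>lam)"
    using linear_psi linear_conv_bounded_linear
    by (intro integral_bounded_linear'[of "psi h" "psi (i h)"]) auto
  finally show ?thesis
    unfolding Qop_eq_integral_inv[OF f] .
qed

lemma equivariant_Qop:
  "f \<in> borel_measurable borel \<Longrightarrow> equivariant act psi (Qop i lam psi act f)"
  unfolding equivariant_def by (simp add: Qop_act)

text \<open>No integrability of \<open>f\<close> is needed: if \<open>g \<mapsto> psi (i g) (f (act g x))\<close> is not integrable,
  then \<open>Qop f x = 0\<close> and the integral defining \<open>Qop (f - Qop f) x\<close> is that same integral.\<close>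

lemma Qop_residual_eq_0:
  assumes f [measurable]: "f \<in> borel_measurable borel"
  shows "Qop i lam psi act (\<lambda>x. f x - Qop i lam psi act f x) x = 0"
proof -
  interpret prob_space lam by (rule prob_space_lam)
  define F where "F g = psi (i g) (f (act g x))" for g
  have Qop_f: "Qop i lam psi act f x = integral\<^sup>L lam F"
    unfolding Qop_def F_def ..
  have "Qop i lam psi act (\<lambda>x. f x - Qop i lam psi act f x) x
      = (\<integral>g. psi (i g) (f (act g x) - Qop i lam psi act f (act g x)) \<partial>lam)"
    unfolding Qop_def ..
  also have "\<dots> = (\<integral>g. F g - integral\<^sup>L lam F \<partial>lam)"
    unfolding F_def Qop_f[symmetric] by (simp add: Qop_act linear_diff[OF linear_psi])
  also have "\<dots> = 0"
  proof (cases "integrable lam F")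
    case True
    then show ?thesis using prob_space space_lam by simp
  next
    case False
    then show ?thesis by (simp add: not_integrable_integral_eq)
  qed
  finally show ?thesis .
qed

lemma pair_prob_space_mu_lam: "pair_prob_space mu lam"
  using prob_space_mu prob_space_lam
  by (simp add: pair_prob_space_def pair_sigma_finite_def prob_space_imp_sigma_finite)

lemma measurable_act_mu_lam: "(\<lambda>p. act (snd p) (fst p)) \<in> measurable (mu \<Otimes>\<^sub>M lam) mu"
  by (simp add: measurable_cong_sets[OF sets_mu_lam sets_mu])

lemma distr_act_mu_lam: "distr (mu \<Otimes>\<^sub>M lam) mu (\<lambda>p. act (snd p) (fst p)) = mu"
proof (rule measure_eqI)
  interpret pair_prob_space mu lam by (rule pair_prob_space_mu_lam)
  fix A assume "A \<in> sets (distr (mu \<Otimes>\<^sub>M lam) mu (\<lambda>p. act (snd p) (fst p)))"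
  then have A: "A \<in> sets mu" by simp
  have act_g: "act g \<in> measurable mu borel" for g
    by (simp add: measurable_cong_sets[OF sets_mu refl])
  have "emeasure mu (act g -` A) = emeasure mu A" for g
    using emeasure_distr[OF act_g, of A] A by (simp add: distr_act sets_mu)
  moreover have "(\<lambda>p. act (snd p) (fst p)) -` A \<in> sets (mu \<Otimes>\<^sub>M lam)"
    using measurable_sets[OF measurable_act_mu_lam A] by (simp add: space_pair_measure)
  ultimately have "emeasure (mu \<Otimes>\<^sub>M lam) ((\<lambda>p. act (snd p) (fst p)) -` A) = emeasure mu A"
    using emeasure_pair_measure_alt2 M2.emeasure_space_1 by (simp add: vimage_def)
  then show "emeasure (distr (mu \<Otimes>\<^sub>M lam) mu (\<lambda>p. act (snd p) (fst p))) A = emeasure mu A"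
    using emeasure_distr[OF measurable_act_mu_lam A] by (simp add: space_pair_measure)
qed simp

lemma integrable_act_mu_lam:
  fixes \<phi> :: "'x \<Rightarrow> 'b::{banach, second_countable_topology}"
  assumes "integrable mu \<phi>"
  shows "integrable (mu \<Otimes>\<^sub>M lam) (\<lambda>p. \<phi> (act (snd p) (fst p)))"
  using assms integrable_distr_eq[OF measurable_act_mu_lam, of \<phi>]
  by (simp add: distr_act_mu_lam)

lemma integral_act_mu_lam:
  fixes \<phi> :: "'x \<Rightarrow> 'b::{banach, second_countable_topology}"
  assumes "\<phi> \<in> borel_measurable mu"
  shows "(\<integral>p. \<phi> (act (snd p) (fst p)) \<partial>(mu \<Otimes>\<^sub>M lam)) = integral\<^sup>L mu \<phi>"
  using assms integral_distr[OF measurable_act_mu_lam, of \<phi>]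
  by (simp add: distr_act_mu_lam)

lemma inner_mu_equivariant_Qop_null:
  assumes s: "L2_fun mu s" and a: "L2_fun mu a" and s_equivariant: "equivariant act psi s"
    and Qa: "AE x in mu. Qop i lam psi act a x = 0"
  shows "inner_mu mu s a = 0"
proof -
  interpret pair_prob_space mu lam by (rule pair_prob_space_mu_lam)
  have [measurable]: "s \<in> borel_measurable borel" "a \<in> borel_measurable borel"
    using s a by (simp_all add: L2_fun_borel_measurable)
  define F where "F p = psi (i (snd p)) (a (act (snd p) (fst p)))" for p
  define H where "H p = inner (s (fst p)) (F p)" for p
  have H_act: "H p = inner (s (act (snd p) (fst p))) (a (act (snd p) (fst p)))" for p
    using s_equivariant unfolding H_def F_def equivariant_def by (simp add: inner_psi_adjoint)
  have "integrable mu (\<lambda>x. inner (s x) (a x))"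
    using s a by (rule L2_fun_integrable_inner)
  then have H_int: "integrable (mu \<Otimes>\<^sub>M lam) H"
    unfolding H_act by (rule integrable_act_mu_lam)
  have "integrable (mu \<Otimes>\<^sub>M lam) (\<lambda>p. norm (a (act (snd p) (fst p))))"
    using prob_space_mu a
    by (intro integrable_act_mu_lam) (simp add: prob_space_def finite_measure.L2_fun_integrable_norm)
  then have "integrable (mu \<Otimes>\<^sub>M lam) (\<lambda>p. norm (F p))"
    unfolding F_def by simp
  moreover have "F \<in> borel_measurable (mu \<Otimes>\<^sub>M lam)"
    unfolding F_def by measurable
  ultimately have "integrable (mu \<Otimes>\<^sub>M lam) F"
    using integrable_norm_iff by blast
  then have F_int: "AE x in mu. integrable lam (\<lambda>g. F (x, g))"
    by (rule AE_integrable_fst')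
  have "inner_mu mu s a = integral\<^sup>L (mu \<Otimes>\<^sub>M lam) H"
    unfolding inner_mu_def H_act by (rule integral_act_mu_lam[symmetric]) simp
  also have "\<dots> = (\<integral>x. (\<integral>g. H (x, g) \<partial>lam) \<partial>mu)"
    by (rule integral_fst'[OF H_int, symmetric])
  also have "\<dots> = 0"
  proof (rule integral_eq_zero_AE)
    show "AE x in mu. (\<integral>g. H (x, g) \<partial>lam) = 0"
      using F_int Qa
    proof eventually_elim
      case (elim x)
      have "(\<integral>g. H (x, g) \<partial>lam) = inner (s x) (\<integral>g. F (x, g) \<partial>lam)"
        unfolding H_def fst_conv using elim(1) by (rule integral_inner_right)
      also have "\<dots> = inner (s x) (Qop i lam psi act a x)"
        unfolding F_def Qop_def by simp
      finally show ?case
        using elim(2) by simp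
    qed
  qed
  finally show ?thesis .
qed

end

theorem lemma3p1:
  fixes m :: "'g::{second_countable_topology, t2_space} \<Rightarrow> 'g \<Rightarrow> 'g"
    and i :: "'g \<Rightarrow> 'g" and e :: 'g and lam :: "'g measure"
    and act :: "'g \<Rightarrow> 'x::polish_space \<Rightarrow> 'x" and mu :: "'x measure"
    and psi :: "'g \<Rightarrow> 'y::euclidean_space \<Rightarrow> 'y"
    and U :: "('x \<Rightarrow> 'y) set"
  assumes "compact_group m i e"
    and "haar_prob m lam"
    and "measurable_action m e act"
    and "unitary_rep m e psi"
    and "invariant_prob act mu"
    and U_L2: "\<forall>f\<in>U. L2_fun mu f"
    and U_zero: "(\<lambda>x. 0) \<in> U"
    and U_add: "\<forall>f\<in>U. \<forall>h\<in>U. (\<lambda>x. f x + h x) \<in> U"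
    and U_scale: "\<forall>c. \<forall>f\<in>U. (\<lambda>x. c *\<^sub>R f x) \<in> U"
    and U_ae: "\<forall>f\<in>U. \<forall>h. L2_fun mu h \<and> (AE x in mu. f x = h x) \<longrightarrow> h \<in> U"
    and U_Q: "\<forall>f\<in>U. Qop i lam psi act f \<in> U"
  shows "let S = {f\<in>U. equivariant act psi f};
             A = {f\<in>U. AE x in mu. Qop i lam psi act f x = 0}
         in (\<forall>s\<in>S. \<forall>a\<in>A. inner_mu mu s a = 0) \<and>
            (\<forall>f\<in>U. \<exists>s\<in>S. \<exists>a\<in>A. AE x in mu. f x = s x + a x)"
proof -
  interpret equivariant_setting m i e lam act mu psi
    by unfold_locales fact+
  show ?thesis
    unfolding Let_def
  proof (intro conjI ballI)
    fix s a
    assume "s \<in> {f \<in> U. equivariant act psi f}" and "a \<in> {f \<in> U. AE x in mu. Qop i lam psi act f x = 0}"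
    then show "inner_mu mu s a = 0"
      using U_L2 by (auto intro: inner_mu_equivariant_Qop_null)
  next
    fix f assume f: "f \<in> U"
    let ?s = "Qop i lam psi act f"
    let ?a = "\<lambda>x. f x - ?s x"
    have f_measurable: "f \<in> borel_measurable borel"
      using U_L2 f L2_fun_borel_measurable by blast
    have s_U: "?s \<in> U"
      using U_Q f by blast
    have "(\<lambda>x. (-1) *\<^sub>R ?s x) \<in> U"
      using U_scale s_U by blast
    from U_add[rule_format, OF f this] have a_U: "?a \<in> U"
      by simp
    show "\<exists>s\<in>{f \<in> U. equivariant act psi f}. \<exists>a\<in>{f \<in> U. AE x in mu. Qop i lam psi act f x = 0}.
        AE x in mu. f x = s x + a x"
      using s_U a_U equivariant_Qop[OF f_measurable] Qop_residual_eq_0[OF f_measurable]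
      by (intro bexI[of _ ?s] bexI[of _ ?a]) auto
  qed
qed

end
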